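(* Let $q$ be a prime power and let $n\ge 1$, $k\ge1$ and $0\le x\le k$ be integers. Let $\mathbf{M}$ be a random $n\times k$ matrix over $\mathbb{F}_q$ whose entries are independent and uniformly distributed on $\mathbb{F}_q$ (the coding vectors of $n$ received non-systematic random linear combinations of $k$ source packets), and let $X=\{i\in\{1,\dots,k\}:\mathbf{e}_i\in\mathrm{Row}(\mathbf{M})\}$ (the set of recoverable source packets). Then $$P_{\mathrm{ns}}(|X|\ge x\mid N=n)=\frac{1}{q^{nk}}\sum_{r=x}^{\min(n,k)}\left(\sum_{i=x}^{r}\binom{k}{i}\sum_{j=0}^{k-i}(-1)^j\binom{k-i}{j}\binom{k-i-j}{r-i-j}_q\right)\prod_{\ell=0}^{r-1}(q^n-q^\ell),$$ where an empty sum equals $0$ and an empty product equals $1$.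
   Context: $\mathbf{e}_i$ denotes the $i$-th standard unit vector of $\mathbb{F}_q^k$, and $\mathrm{Row}(\mathbf{M})$ is the row space of $\mathbf{M}$. $N$ denotes the number of rows of $\mathbf{M}$. $\binom{m}{d}$ is the ordinary binomial coefficient. $\binom{m}{d}_q$ is the Gaussian binomial coefficient, i.e. the number of $d$-dimensional subspaces of an $m$-dimensional vector space over $\mathbb{F}_q$, $\binom{m}{d}_q=\prod_{i=0}^{d-1}\frac{q^{m}-q^{i}}{q^{d}-q^{i}}$ for $0\le d\le m$. By convention $\binom{m}{d}_q=0$ if $d<0$ or $d>m$. *)

theory Defs
  imports "HOL-Probability.Probability"
begin

definition matrices :: "nat \<Rightarrow> nat \<Rightarrow> (nat \<Rightarrow> nat \<Rightarrow> 'a::zero) set" where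
  "matrices n k = {M. \<forall>i j. (n \<le> i \<or> k \<le> j) \<longrightarrow> M i j = 0}"

definition row_space :: "nat \<Rightarrow> nat \<Rightarrow> (nat \<Rightarrow> nat \<Rightarrow> 'a::field) \<Rightarrow> (nat \<Rightarrow> 'a) set" where
  "row_space n k M = {v. \<exists>c :: nat \<Rightarrow> 'a. v = (\<lambda>j. \<Sum>i<n. c i * M i j)}"

definition unit_vec :: "nat \<Rightarrow> nat \<Rightarrow> 'a::zero_neq_one" where
  "unit_vec i = (\<lambda>j. if j = i then 1 else 0)"

text \<open>Set of recoverable source packets (0-indexed columns).\<close>
definition recoverable :: "nat \<Rightarrow> nat \<Rightarrow> (nat \<Rightarrow> nat \<Rightarrow> 'a::field) \<Rightarrow> nat set" where
  "recoverable n k M = {i. i < k \<and> unit_vec i \<in> row_space n k M}"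

definition gauss_binom :: "real \<Rightarrow> int \<Rightarrow> int \<Rightarrow> real" where
  "gauss_binom q m d = (if 0 \<le> d \<and> d \<le> m then
     (\<Prod>i<nat d. (q ^ nat m - q ^ i) / (q ^ nat d - q ^ i)) else 0)"

end

theory Submission
  imports Defs "HOL-Library.Function_Algebras"
begin

text \<open>Column \<open>i\<close> of \<open>M\<close> is recoverable iff \<open>e\<^sub>i\<close> lies in the row space, i.e. iff the
  \<open>i\<close>-th column is not in the span of the other columns: a linear functional separating it
  from them is a combination of the rows. Call such columns coloops. For a fixed set \<open>T\<close> of
  \<open>t\<close> columns, the matrices of rank \<open>r\<close> in which every column of \<open>T\<close> is a coloop arise from
  a rank-\<open>(r - t)\<close> family of the other \<open>k - t\<close> columns, of which there are
  \<open>[k - t, r - t]\<^sub>q \<Prod>l<r - t. (q\<^sup>n - q\<^sup>l)\<close>, by adding the columns of \<open>T\<close> one at a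
  time outside the current span, in \<open>q\<^sup>n - q\<^sup>l\<close> ways each. Inclusion--exclusion over \<open>T\<close>
  turns these counts into the number of matrices with at least \<open>x\<close> coloops; regrouping by the
  rank \<open>r\<close> gives the formula.\<close>

section \<open>Vectors over a finite field\<close>

interpretation vs: vector_space "\<lambda>a (v :: nat \<Rightarrow> 'a::field) i. a * v i"
  by unfold_locales (auto simp: algebra_simps fun_eq_iff)

interpretation vs_pair: vector_space_pair "\<lambda>a (v :: nat \<Rightarrow> 'a::field) i. a * v i" "times :: 'a \<Rightarrow> 'a \<Rightarrow> 'a"
  by (rule vector_space_pair.intro[OF vs.vector_space_axioms]) unfold_locales

definition vecs :: "nat \<Rightarrow> (nat \<Rightarrow> 'a::zero) set" where
  "vecs n = {v. \<forall>i\<ge>n. v i = 0}"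

lemma subspace_vecs: "vs.subspace (vecs n :: (nat \<Rightarrow> 'a::field) set)"
  unfolding vs.subspace_def vecs_def by (auto simp: zero_fun_def)

lemma span_subset_vecs: "S \<subseteq> vecs n \<Longrightarrow> vs.span S \<subseteq> (vecs n :: (nat \<Rightarrow> 'a::field) set)"
  using vs.span_minimal subspace_vecs by blast

lemma bij_betw_restrict_vecs:
  "bij_betw (\<lambda>v. restrict v {..<n}) (vecs n :: (nat \<Rightarrow> 'a::zero) set) ({..<n} \<rightarrow>\<^sub>E UNIV)"
proof (rule bij_betw_byWitness[where f' = "\<lambda>f i. if i < n then f i else 0"])
  show "\<forall>v\<in>vecs n. (\<lambda>i. if i < n then restrict v {..<n} i else 0) = (v :: nat \<Rightarrow> 'a)"
    by (simp add: vecs_def fun_eq_iff)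
  show "\<forall>f\<in>{..<n} \<rightarrow>\<^sub>E UNIV. restrict (\<lambda>i. if i < n then f i else 0) {..<n} = (f :: nat \<Rightarrow> 'a)"
    by (simp add: PiE_iff extensional_def fun_eq_iff)
  show "(\<lambda>v. restrict v {..<n}) ` vecs n \<subseteq> {..<n} \<rightarrow>\<^sub>E (UNIV :: 'a set)"
    by (simp add: image_subset_iff)
  show "(\<lambda>f i. if i < n then f i else 0) ` ({..<n} \<rightarrow>\<^sub>E UNIV) \<subseteq> (vecs n :: (nat \<Rightarrow> 'a) set)"
    by (simp add: vecs_def image_subset_iff)
qed

lemma finite_vecs: "finite (vecs n :: (nat \<Rightarrow> 'a::{finite,zero}) set)"
  by (simp add: bij_betw_finite[OF bij_betw_restrict_vecs] finite_PiE)

lemma card_vecs: "card (vecs n :: (nat \<Rightarrow> 'a::{finite,zero}) set) = CARD('a) ^ n"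
  by (simp add: bij_betw_same_card[OF bij_betw_restrict_vecs] card_PiE)

lemma one_less_card_field: "1 < CARD('a::{finite,field})"
proof -
  have "card {0::'a, 1} \<le> CARD('a)" by (rule card_mono) simp_all
  then show ?thesis by simp
qed

lemma span_insert_eq_image:
  "vs.span (insert v S) = (\<lambda>(a, u). u + (\<lambda>i. a * v i)) ` (UNIV \<times> vs.span S)"
proof (rule set_eqI)
  fix x :: "nat \<Rightarrow> 'a::field"
  show "x \<in> vs.span (insert v S) \<longleftrightarrow> x \<in> (\<lambda>(a, u). u + (\<lambda>i. a * v i)) ` (UNIV \<times> vs.span S)"
    unfolding vs.span_breakdown_eq
  proof
    assume "\<exists>a. x - (\<lambda>i. a * v i) \<in> vs.span S"
    then obtain a where "x - (\<lambda>i. a * v i) \<in> vs.span S" by blast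
    then show "x \<in> (\<lambda>(a, u). u + (\<lambda>i. a * v i)) ` (UNIV \<times> vs.span S)"
      by (intro image_eqI[where x = "(a, x - (\<lambda>i. a * v i))"]) auto
  next
    assume "x \<in> (\<lambda>(a, u). u + (\<lambda>i. a * v i)) ` (UNIV \<times> vs.span S)"
    then obtain a u where "u \<in> vs.span S" "x = u + (\<lambda>i. a * v i)" by auto
    then show "\<exists>a. x - (\<lambda>i. a * v i) \<in> vs.span S" by (intro exI[of _ a]) auto
  qed
qed

lemma card_span_insert_notin:
  fixes S :: "(nat \<Rightarrow> 'a::{finite,field}) set"
  assumes "v \<notin> vs.span S"
  shows "card (vs.span (insert v S)) = CARD('a) * card (vs.span S)"
proof -
  have "inj_on (\<lambda>(a, u). u + (\<lambda>i. a * v i)) (UNIV \<times> vs.span S)"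
  proof (rule inj_onI, clarify)
    fix a b u w
    assume u: "u \<in> vs.span S" "w \<in> vs.span S" and eq: "u + (\<lambda>i. a * v i) = w + (\<lambda>i. b * v i)"
    have "a = b"
    proof (rule ccontr)
      assume "a \<noteq> b"
      have "(\<lambda>i. (a - b) * v i) = w - u"
        using eq by (auto simp: fun_eq_iff algebra_simps dest: fun_cong)
      then have "(\<lambda>i. (a - b) * v i) \<in> vs.span S" using u by (simp add: vs.span_diff)
      then have "(\<lambda>i. inverse (a - b) * ((a - b) * v i)) \<in> vs.span S" by (rule vs.span_scale)
      with \<open>a \<noteq> b\<close> assms show False by simp
    qed
    with eq show "a = b \<and> u = w" by simp
  qed
  then have "card (vs.span (insert v S)) = card ((UNIV :: 'a set) \<times> vs.span S)"
    unfolding span_insert_eq_image by (rule card_image)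
  then show ?thesis by (simp add: card_cartesian_product)
qed

lemma card_span_independent:
  fixes B :: "(nat \<Rightarrow> 'a::{finite,field}) set"
  assumes "vs.independent B" "finite B"
  shows "card (vs.span B) = CARD('a) ^ card B"
  using assms(2,1)
proof (induction B rule: finite_induct)
  case (insert v B)
  then show ?case by (simp add: card_span_insert_notin vs.independent_insert)
qed (simp add: vs.span_empty)

lemma card_span_eq_power_dim:
  fixes S :: "(nat \<Rightarrow> 'a::{finite,field}) set"
  assumes "S \<subseteq> vecs n"
  shows "card (vs.span S) = CARD('a) ^ vs.dim S"
proof -
  obtain B where B: "B \<subseteq> S" "vs.independent B" "S \<subseteq> vs.span B" "card B = vs.dim S"
    by (rule vs.basis_exists)
  have "finite B" using finite_subset[OF subset_trans[OF B(1) assms] finite_vecs] .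
  have "vs.span S = vs.span B"
    using vs.span_minimal[OF B(3) vs.subspace_span] vs.span_mono[OF B(1)] by (rule subset_antisym)
  then show ?thesis using card_span_independent[OF B(2) \<open>finite B\<close>] B(4) by simp
qed

lemma dim_insert_vecs:
  fixes S :: "(nat \<Rightarrow> 'a::{finite,field}) set"
  assumes "insert y S \<subseteq> vecs n"
  shows "vs.dim (insert y S) = (if y \<in> vs.span S then vs.dim S else Suc (vs.dim S))"
proof -
  have S: "S \<subseteq> vecs n" using assms by simp
  note card_dim = card_span_eq_power_dim[OF S] card_span_eq_power_dim[OF assms]
  note inj = power_inject_exp[OF one_less_card_field[where 'a = 'a]]
  show ?thesis
  proof (cases "y \<in> vs.span S")
    case True
    then have "vs.span (insert y S) = vs.span S" by (rule vs.span_redundant)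
    with True card_dim inj show ?thesis by simp
  next
    case False
    then have "CARD('a) ^ vs.dim (insert y S) = CARD('a) ^ Suc (vs.dim S)"
      using card_span_insert_notin[of y S] card_dim by simp
    with False inj show ?thesis by presburger
  qed
qed

lemma dim_Un_le:
  fixes S T :: "(nat \<Rightarrow> 'a::{finite,field}) set"
  assumes "finite T" "S \<union> T \<subseteq> vecs n"
  shows "vs.dim (S \<union> T) \<le> vs.dim S + card T"
  using assms
proof (induction T rule: finite_induct)
  case (insert y T)
  have "S \<union> insert y T = insert y (S \<union> T)" by blast
  then have "vs.dim (S \<union> insert y T) \<le> Suc (vs.dim (S \<union> T))"
    using dim_insert_vecs[of y "S \<union> T" n] insert.prems by simp
  moreover have "vs.dim (S \<union> T) \<le> vs.dim S + card T"
    using insert.IH insert.prems by blast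
  ultimately show ?case using insert.hyps by simp
qed simp

lemma dim_image_Un_le:
  fixes C :: "'b \<Rightarrow> nat \<Rightarrow> 'a::{finite,field}"
  assumes "finite T" "C ` (B \<union> T) \<subseteq> vecs n"
  shows "vs.dim (C ` (B \<union> T)) \<le> vs.dim (C ` B) + card T"
proof -
  have "vs.dim (C ` B \<union> C ` T) \<le> vs.dim (C ` B) + card (C ` T)"
    using dim_Un_le[of "C ` T" "C ` B" n] assms by (simp add: image_Un)
  then show ?thesis using card_image_le[OF assms(1), of C] by (simp add: image_Un)
qed

section \<open>Counting families of vectors by rank\<close>

lemma card_extensions_by_dim:
  fixes S :: "(nat \<Rightarrow> 'a::{finite,field}) set"
  assumes "S \<subseteq> vecs n"
  shows "real (card {y \<in> vecs n. P (vs.dim (insert y S))}) =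
    of_bool (P (vs.dim S)) * real CARD('a) ^ vs.dim S +
    of_bool (P (Suc (vs.dim S))) * (real CARD('a) ^ n - real CARD('a) ^ vs.dim S)"
proof -
  let ?U = "vs.span S"
  have U: "?U \<subseteq> vecs n" by (rule span_subset_vecs[OF assms])
  have fin: "finite ?U" using finite_subset[OF U finite_vecs] .
  have cardU: "card ?U = CARD('a) ^ vs.dim S" by (rule card_span_eq_power_dim[OF assms])
  have "{y \<in> vecs n. P (vs.dim (insert y S))} =
      (if P (vs.dim S) then ?U else {}) \<union> (if P (Suc (vs.dim S)) then vecs n - ?U else {})"
    using U assms dim_insert_vecs[of _ S n] by (auto split: if_splits)
  moreover have "card (vecs n - ?U) = CARD('a) ^ n - CARD('a) ^ vs.dim S"
    using card_Diff_subset[OF fin U] card_vecs cardU by metis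
  moreover have "CARD('a) ^ vs.dim S \<le> CARD('a) ^ n"
    using card_mono[OF finite_vecs U] card_vecs cardU by metis
  ultimately show ?thesis
    using fin cardU by (simp add: card_Un_disjoint finite_vecs of_nat_diff)
qed

lemma card_PiE_insert_filter:
  assumes "j \<notin> J" "finite J" "finite V"
  shows "card {C \<in> insert j J \<rightarrow>\<^sub>E V. P C} = (\<Sum>g\<in>J \<rightarrow>\<^sub>E V. card {y \<in> V. P (g(j := y))})"
proof -
  let ?upd = "\<lambda>(y, g). g(j := y)"
  let ?A = "{p \<in> V \<times> (J \<rightarrow>\<^sub>E V). P (?upd p)}"
  let ?swap = "\<lambda>(g, y). (y, g)"
  let ?B = "SIGMA g : J \<rightarrow>\<^sub>E V. {y \<in> V. P (g(j := y))}"
  have "{C \<in> insert j J \<rightarrow>\<^sub>E V. P C} = ?upd ` ?A"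
    unfolding PiE_insert_eq by blast
  moreover have "inj_on ?upd ?A"
    by (rule inj_on_subset[OF inj_combinator[OF assms(1), of "\<lambda>_. V"]]) blast
  moreover have "?A = ?swap ` ?B"
    by (auto simp: image_iff)
  moreover have "inj_on ?swap ?B"
    by (rule inj_onI) clarsimp
  moreover have "finite (J \<rightarrow>\<^sub>E V)" using assms by (simp add: finite_PiE)
  ultimately show ?thesis
    using assms(3) by (simp add: card_image card_SigmaI)
qed

definition rank_count :: "'a::{finite,field} itself \<Rightarrow> nat \<Rightarrow> 'b set \<Rightarrow> nat \<Rightarrow> nat" where
  "rank_count _ n J r = card {C \<in> J \<rightarrow>\<^sub>E (vecs n :: (nat \<Rightarrow> 'a) set). vs.dim (C ` J) = r}"

lemma rank_count_empty: "rank_count TYPE('a::{finite,field}) n {} r = of_bool (r = 0)"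
  by (simp add: rank_count_def vs.dim_eq_card_independent[OF vs.independent_empty])

lemma rank_count_insert:
  assumes "j \<notin> J" "finite J"
  shows "real (rank_count TYPE('a::{finite,field}) n (insert j J) r) =
    real CARD('a) ^ r * real (rank_count TYPE('a) n J r) +
    of_bool (0 < r) * (real CARD('a) ^ n - real CARD('a) ^ (r - 1)) * real (rank_count TYPE('a) n J (r - 1))"
proof -
  let ?V = "vecs n :: (nat \<Rightarrow> 'a) set"
  let ?q = "real CARD('a)"
  have img: "(g(j := y)) ` insert j J = insert y (g ` J)" for g :: "'b \<Rightarrow> nat \<Rightarrow> 'a" and y
    using assms(1) by auto
  have count_rank: "(\<Sum>g\<in>J \<rightarrow>\<^sub>E ?V. of_bool (vs.dim (g ` J) = d) * c) = real (rank_count TYPE('a) n J d) * c"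
    for d c using assms(2) by (simp add: rank_count_def Int_def finite_PiE finite_vecs)
  have "real (rank_count TYPE('a) n (insert j J) r) =
      (\<Sum>g\<in>J \<rightarrow>\<^sub>E ?V. real (card {y \<in> ?V. vs.dim (insert y (g ` J)) = r}))"
    unfolding rank_count_def card_PiE_insert_filter[OF assms finite_vecs] img by simp
  also have "\<dots> = (\<Sum>g\<in>J \<rightarrow>\<^sub>E ?V. of_bool (vs.dim (g ` J) = r) * ?q ^ r +
      of_bool (0 < r) * (of_bool (vs.dim (g ` J) = r - 1) * (?q ^ n - ?q ^ (r - 1))))"
  proof (rule sum.cong[OF refl])
    fix g assume "g \<in> J \<rightarrow>\<^sub>E ?V"
    then have "g ` J \<subseteq> ?V" by (auto simp: PiE_mem)
    then have "real (card {y \<in> ?V. vs.dim (insert y (g ` J)) = r}) =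
        of_bool (vs.dim (g ` J) = r) * ?q ^ vs.dim (g ` J) +
        of_bool (Suc (vs.dim (g ` J)) = r) * (?q ^ n - ?q ^ vs.dim (g ` J))"
      by (rule card_extensions_by_dim)
    then show "real (card {y \<in> ?V. vs.dim (insert y (g ` J)) = r}) =
        of_bool (vs.dim (g ` J) = r) * ?q ^ r +
        of_bool (0 < r) * (of_bool (vs.dim (g ` J) = r - 1) * (?q ^ n - ?q ^ (r - 1)))"
      by (cases "vs.dim (g ` J) = r"; cases r) auto
  qed
  also have "\<dots> = ?q ^ r * real (rank_count TYPE('a) n J r) +
      of_bool (0 < r) * (?q ^ n - ?q ^ (r - 1)) * real (rank_count TYPE('a) n J (r - 1))"
    unfolding sum.distrib sum_distrib_left[symmetric] count_rank by (simp add: mult_ac)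
  finally show ?thesis .
qed

text \<open>\<open>q_falling q m b\<close> counts the linearly independent \<open>b\<close>-tuples in \<open>F\<^sub>q\<^sup>m\<close>.\<close>

definition q_falling :: "real \<Rightarrow> nat \<Rightarrow> nat \<Rightarrow> real" where
  "q_falling q m b = (\<Prod>i<b. q ^ m - q ^ i)"

lemma q_falling_0 [simp]: "q_falling q m 0 = 1"
  by (simp add: q_falling_def)

lemma q_falling_Suc: "q_falling q m (Suc b) = q_falling q m b * (q ^ m - q ^ b)"
  by (simp add: q_falling_def)

lemma q_falling_eq_0: "m < b \<Longrightarrow> q_falling q m b = 0"
  unfolding q_falling_def by (rule prod_zero) (auto intro!: bexI[where x = m])

lemma q_falling_diag_neq_0: "1 < q \<Longrightarrow> q_falling q b b \<noteq> 0"
  by (simp add: q_falling_def prod_zero_iff power_strict_increasing_iff)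

lemma q_falling_Suc_Suc: "q_falling q (Suc m) (Suc b) = (q ^ Suc m - 1) * q ^ b * q_falling q m b"
proof (induction b)
  case (Suc b)
  have "q_falling q (Suc m) (Suc (Suc b)) = (q ^ Suc m - 1) * q ^ b * q_falling q m b * (q * (q ^ m - q ^ b))"
    unfolding q_falling_Suc[of q "Suc m" "Suc b"] Suc.IH by (simp add: algebra_simps)
  then show ?case by (simp add: q_falling_Suc algebra_simps)
qed (simp add: q_falling_def)

lemma q_falling_pascal:
  "q_falling q (Suc m) (Suc b) = q ^ Suc b * q_falling q m (Suc b) + q ^ b * (q ^ Suc b - 1) * q_falling q m b"
  unfolding q_falling_Suc_Suc q_falling_Suc[of q m b] by (simp add: algebra_simps)

lemma gauss_binom_eq_q_falling:
  assumes "1 < q"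
  shows "gauss_binom q (int m) (int d) = q_falling q m d / q_falling q d d"
proof (cases "d \<le> m")
  case True
  then show ?thesis unfolding gauss_binom_def q_falling_def by (simp add: prod_dividef)
qed (simp add: gauss_binom_def q_falling_eq_0)

lemma rank_count_q_falling:
  assumes "finite J"
  shows "real (rank_count TYPE('a::{finite,field}) n J r) * q_falling (real CARD('a)) r r =
    q_falling (real CARD('a)) (card J) r * q_falling (real CARD('a)) n r"
  using assms
proof (induction J arbitrary: r rule: finite_induct)
  case empty
  then show ?case by (cases r) (simp_all add: rank_count_empty q_falling_eq_0)
next
  case (insert j J)
  let ?q = "real CARD('a)"
  show ?case
  proof (cases r)
    case 0
    then show ?thesis using rank_count_insert[OF insert.hyps(2,1), where 'a = 'a, of n 0] insert.IH[of 0] by simp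
  next
    case (Suc c)
    have "real (rank_count TYPE('a) n (insert j J) (Suc c)) * q_falling ?q (Suc c) (Suc c) =
        ?q ^ Suc c * (real (rank_count TYPE('a) n J (Suc c)) * q_falling ?q (Suc c) (Suc c)) +
        (?q ^ n - ?q ^ c) * ?q ^ c * (?q ^ Suc c - 1) * (real (rank_count TYPE('a) n J c) * q_falling ?q c c)"
      unfolding rank_count_insert[OF insert.hyps(2,1)] q_falling_Suc_Suc[of ?q c c]
      by (simp add: algebra_simps)
    also have "\<dots> = ?q ^ Suc c * (q_falling ?q (card J) (Suc c) * q_falling ?q n (Suc c)) +
        (?q ^ n - ?q ^ c) * ?q ^ c * (?q ^ Suc c - 1) * (q_falling ?q (card J) c * q_falling ?q n c)"
      using insert.IH[of c] insert.IH[of "Suc c"] by simp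
    also have "\<dots> = q_falling ?q (Suc (card J)) (Suc c) * q_falling ?q n (Suc c)"
      unfolding q_falling_pascal q_falling_Suc[of ?q n c] by (simp add: algebra_simps)
    finally show ?thesis using Suc insert.hyps by simp
  qed
qed

section \<open>Coloops\<close>

text \<open>As in matroid theory: \<open>i\<close> is a coloop of the family \<open>C\<close> on \<open>K\<close> iff removing \<open>C i\<close>
  lowers its rank.\<close>

definition coloops :: "'b set \<Rightarrow> ('b \<Rightarrow> nat \<Rightarrow> 'a::field) \<Rightarrow> 'b set" where
  "coloops K C = {i \<in> K. C i \<notin> vs.span (C ` (K - {i}))}"

lemma coloops_antimono:
  assumes "i \<in> coloops K C" "i \<in> K'" "K' \<subseteq> K"
  shows "i \<in> coloops K' C"
  using assms vs.span_mono[of "C ` (K' - {i})" "C ` (K - {i})"] unfolding coloops_def by blast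

lemma coloops_insert:
  assumes "a \<in> coloops (insert a K) C" "i \<in> coloops K C"
  shows "i \<in> coloops (insert a K) C"
proof (cases "i = a \<or> a \<in> K")
  case True
  with assms show ?thesis by (auto simp: insert_absorb)
next
  case False
  let ?Y = "C ` (K - {i})"
  have "i \<in> K" "C i \<notin> vs.span ?Y" using assms(2) by (auto simp: coloops_def)
  have "C a \<notin> vs.span (C ` K)"
    using assms(1) False by (auto simp: coloops_def)
  moreover have "C ` K = insert (C i) ?Y" using \<open>i \<in> K\<close> by blast
  moreover have "C ` (insert a K - {i}) = insert (C a) ?Y" using False by blast
  ultimately show ?thesis
    using \<open>i \<in> K\<close> \<open>C i \<notin> vs.span ?Y\<close> vs.in_span_insert[of "C i" "C a" ?Y]
    by (auto simp: coloops_def)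
qed

lemma coloops_iff_dim:
  fixes C :: "'b \<Rightarrow> nat \<Rightarrow> 'a::{finite,field}"
  assumes "finite T" "B \<inter> T = {}" "C ` (B \<union> T) \<subseteq> vecs n"
  shows "T \<subseteq> coloops (B \<union> T) C \<longleftrightarrow> vs.dim (C ` (B \<union> T)) = vs.dim (C ` B) + card T"
  using assms
proof (induction T rule: finite_induct)
  case (insert a T)
  let ?S = "C ` (B \<union> T)"
  have a: "a \<notin> B \<union> T" using insert.hyps(2) insert.prems(1) by blast
  have K: "B \<union> insert a T = insert a (B \<union> T)" by blast
  have S: "?S \<subseteq> vecs n" using insert.prems(2) by blast
  have dim_K: "vs.dim (C ` (B \<union> insert a T)) = (if C a \<in> vs.span ?S then vs.dim ?S else Suc (vs.dim ?S))"
    using dim_insert_vecs[of "C a" ?S n] insert.prems(2) K by simp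
  have le: "vs.dim ?S \<le> vs.dim (C ` B) + card T" by (rule dim_image_Un_le[OF insert.hyps(1) S])
  have IH: "T \<subseteq> coloops (B \<union> T) C \<longleftrightarrow> vs.dim ?S = vs.dim (C ` B) + card T"
    using insert.IH insert.prems by blast
  have a_coloop: "a \<in> coloops (B \<union> insert a T) C \<longleftrightarrow> C a \<notin> vs.span ?S"
    using a by (simp add: coloops_def K)
  show ?case
  proof
    assume H: "insert a T \<subseteq> coloops (B \<union> insert a T) C"
    have "T \<subseteq> coloops (B \<union> T) C"
    proof
      fix i assume "i \<in> T"
      then show "i \<in> coloops (B \<union> T) C"
        using H coloops_antimono[of i "B \<union> insert a T" C "B \<union> T"] by blast
    qed
    then have "vs.dim ?S = vs.dim (C ` B) + card T" using IH by blast
    moreover have "C a \<notin> vs.span ?S" using H a_coloop by blast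
    ultimately show "vs.dim (C ` (B \<union> insert a T)) = vs.dim (C ` B) + card (insert a T)"
      using dim_K insert.hyps by simp
  next
    assume H: "vs.dim (C ` (B \<union> insert a T)) = vs.dim (C ` B) + card (insert a T)"
    then have "C a \<notin> vs.span ?S \<and> vs.dim ?S = vs.dim (C ` B) + card T"
      using dim_K le insert.hyps by (simp split: if_splits)
    then have "a \<in> coloops (insert a (B \<union> T)) C" "T \<subseteq> coloops (B \<union> T) C"
      using IH a_coloop K by simp_all
    then show "insert a T \<subseteq> coloops (B \<union> insert a T) C"
      unfolding K using coloops_insert[of a "B \<union> T" C] by blast
  qed
qed simp

definition coloop_count :: "'a::{finite,field} itself \<Rightarrow> nat \<Rightarrow> 'b set \<Rightarrow> 'b set \<Rightarrow> nat \<Rightarrow> nat" where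
  "coloop_count _ n K T r =
     card {C \<in> K \<rightarrow>\<^sub>E (vecs n :: (nat \<Rightarrow> 'a) set). T \<subseteq> coloops K C \<and> vs.dim (C ` K) = r}"

lemma coloop_count_empty: "coloop_count TYPE('a::{finite,field}) n K {} r = rank_count TYPE('a) n K r"
  by (simp add: coloop_count_def rank_count_def)

lemma coloops_fun_upd_iff_dim:
  fixes g :: "'b \<Rightarrow> nat \<Rightarrow> 'a::{finite,field}"
  assumes "finite T" "B \<inter> T = {}" "a \<notin> B \<union> T" "g ` (B \<union> T) \<subseteq> vecs n" "y \<in> vecs n"
  shows "insert a T \<subseteq> coloops (insert a (B \<union> T)) (g(a := y)) \<longleftrightarrow>
    vs.dim (insert y (g ` (B \<union> T))) = vs.dim (g ` B) + Suc (card T)"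
proof -
  have img: "(g(a := y)) ` insert a (B \<union> T) = insert y (g ` (B \<union> T))" "(g(a := y)) ` B = g ` B"
    using assms(3) by auto
  then have "(g(a := y)) ` (B \<union> insert a T) \<subseteq> vecs n" using assms(4,5) by simp
  then show ?thesis
    using coloops_iff_dim[of "insert a T" B "g(a := y)" n] assms(1-3) img by simp
qed

lemma card_coloop_extensions:
  fixes g :: "'b \<Rightarrow> nat \<Rightarrow> 'a::{finite,field}"
  assumes "finite T" "B \<inter> T = {}" "a \<notin> B \<union> T" "g ` (B \<union> T) \<subseteq> vecs n"
  shows "real (card {y \<in> vecs n. insert a T \<subseteq> coloops (insert a (B \<union> T)) (g(a := y)) \<and>
      vs.dim ((g(a := y)) ` insert a (B \<union> T)) = r}) =
    of_bool (0 < r) * (of_bool (T \<subseteq> coloops (B \<union> T) g \<and> vs.dim (g ` (B \<union> T)) = r - 1) *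
      (real CARD('a) ^ n - real CARD('a) ^ (r - 1)))"
proof -
  let ?S = "g ` (B \<union> T)"
  let ?e = "vs.dim (g ` B)"
  let ?t = "card T"
  have le: "vs.dim ?S \<le> ?e + ?t" by (rule dim_image_Un_le[OF assms(1,4)])
  have free: "T \<subseteq> coloops (B \<union> T) g \<longleftrightarrow> vs.dim ?S = ?e + ?t"
    by (rule coloops_iff_dim[OF assms(1,2,4)])
  have "(g(a := y)) ` insert a (B \<union> T) = insert y ?S" for y using assms(3) by auto
  then have "{y \<in> vecs n. insert a T \<subseteq> coloops (insert a (B \<union> T)) (g(a := y)) \<and>
      vs.dim ((g(a := y)) ` insert a (B \<union> T)) = r} =
    {y \<in> vecs n. vs.dim (insert y ?S) = ?e + Suc ?t \<and> vs.dim (insert y ?S) = r}"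
    using coloops_fun_upd_iff_dim[OF assms] by auto
  moreover have "real (card {y \<in> vecs n. vs.dim (insert y ?S) = ?e + Suc ?t \<and> vs.dim (insert y ?S) = r}) =
      of_bool (vs.dim ?S = ?e + Suc ?t \<and> vs.dim ?S = r) * real CARD('a) ^ vs.dim ?S +
      of_bool (Suc (vs.dim ?S) = ?e + Suc ?t \<and> Suc (vs.dim ?S) = r) *
        (real CARD('a) ^ n - real CARD('a) ^ vs.dim ?S)"
    by (rule card_extensions_by_dim[OF assms(4)])
  \<comment> \<open>by \<open>le\<close>, the rank \<open>?e + Suc ?t\<close> is only reached when \<open>y\<close> leaves the span of \<open>?S\<close>\<close>
  ultimately show ?thesis using le free by (cases r) auto
qed

lemma coloop_count_insert:
  fixes B T :: "'b set"
  assumes "finite B" "finite T" "B \<inter> T = {}" "a \<notin> B \<union> T"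
  shows "real (coloop_count TYPE('a::{finite,field}) n (insert a (B \<union> T)) (insert a T) r) =
    of_bool (0 < r) * (real CARD('a) ^ n - real CARD('a) ^ (r - 1)) *
    real (coloop_count TYPE('a) n (B \<union> T) T (r - 1))"
proof -
  let ?V = "vecs n :: (nat \<Rightarrow> 'a) set"
  let ?c = "real CARD('a) ^ n - real CARD('a) ^ (r - 1)"
  have "real (coloop_count TYPE('a) n (insert a (B \<union> T)) (insert a T) r) =
      (\<Sum>g\<in>B \<union> T \<rightarrow>\<^sub>E ?V. real (card {y \<in> ?V. insert a T \<subseteq> coloops (insert a (B \<union> T)) (g(a := y)) \<and>
          vs.dim ((g(a := y)) ` insert a (B \<union> T)) = r}))"
    unfolding coloop_count_def of_nat_sum[symmetric] of_nat_eq_iff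
    by (rule card_PiE_insert_filter[OF assms(4) _ finite_vecs]) (use assms(1,2) in simp)
  also have "\<dots> = (\<Sum>g\<in>B \<union> T \<rightarrow>\<^sub>E ?V. of_bool (0 < r) *
      (of_bool (T \<subseteq> coloops (B \<union> T) g \<and> vs.dim (g ` (B \<union> T)) = r - 1) * ?c))"
    using assms(2-4) by (intro sum.cong refl card_coloop_extensions) (auto simp: PiE_mem)
  also have "\<dots> = of_bool (0 < r) * (real (coloop_count TYPE('a) n (B \<union> T) T (r - 1)) * ?c)"
    using assms(1,2)
    by (simp only: sum_distrib_left[symmetric]) (simp add: coloop_count_def Int_def finite_PiE finite_vecs)
  finally show ?thesis by simp
qed

lemma coloop_count_eq_rank_count:
  fixes B T :: "'b set"
  assumes "finite B" "finite T" "B \<inter> T = {}"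
  shows "real (coloop_count TYPE('a::{finite,field}) n (B \<union> T) T r) =
    of_bool (card T \<le> r) * real (rank_count TYPE('a) n B (r - card T)) *
    (\<Prod>l\<in>{r - card T..<r}. real CARD('a) ^ n - real CARD('a) ^ l)"
  using assms(2,3)
proof (induction T arbitrary: r rule: finite_induct)
  case empty
  then show ?case by (simp add: coloop_count_empty)
next
  case (insert a T)
  let ?q = "real CARD('a)"
  have a: "a \<notin> B \<union> T" and BT: "B \<inter> T = {}" using insert.hyps(2) insert.prems by auto
  note step = coloop_count_insert[OF assms(1) insert.hyps(1) BT a, where 'a = 'a and n = n]
  show ?case
  proof (cases r)
    case 0
    then show ?thesis using step insert.hyps by simp
  next
    case (Suc c)
    have "(\<Prod>l\<in>{c - card T..<Suc c}. ?q ^ n - ?q ^ l) = (\<Prod>l\<in>{c - card T..<c}. ?q ^ n - ?q ^ l) * (?q ^ n - ?q ^ c)"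
      if "card T \<le> c" using that by (simp add: prod.atLeastLessThan_Suc)
    with Suc show ?thesis using step insert.IH[OF BT, of c] insert.hyps by (auto simp: mult_ac)
  qed
qed

lemma coloop_count_eq_gauss_binom:
  fixes K T :: "'b set"
  assumes "finite K" "T \<subseteq> K"
  shows "real (coloop_count TYPE('a::{finite,field}) n K T r) =
    gauss_binom (real CARD('a)) (int (card K) - int (card T)) (int r - int (card T)) *
    q_falling (real CARD('a)) n r"
proof -
  let ?q = "real CARD('a)"
  let ?B = "K - T"
  let ?t = "card T"
  have q: "1 < ?q" using one_less_card_field[where 'a = 'a] by simp
  have K: "?B \<union> T = K" and disj: "?B \<inter> T = {}" using assms(2) by blast+
  have fin: "finite T" "finite ?B" using assms finite_subset by auto
  have card_B: "card ?B = card K - ?t" using assms fin(1) by (simp add: card_Diff_subset)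
  have "?t \<le> card K" using assms by (simp add: card_mono)
  have count: "real (coloop_count TYPE('a) n K T r) = of_bool (?t \<le> r) *
      real (rank_count TYPE('a) n ?B (r - ?t)) * (\<Prod>l\<in>{r - ?t..<r}. ?q ^ n - ?q ^ l)"
    using coloop_count_eq_rank_count[OF fin(2,1) disj, where 'a = 'a, of n r] K by simp
  show ?thesis
  proof (cases "?t \<le> r")
    case True
    have "real (rank_count TYPE('a) n ?B (r - ?t)) =
        q_falling ?q (card K - ?t) (r - ?t) * q_falling ?q n (r - ?t) / q_falling ?q (r - ?t) (r - ?t)"
      using rank_count_q_falling[OF fin(2), where 'a = 'a and n = n and r = "r - ?t"] q_falling_diag_neq_0[OF q]
      by (simp add: card_B field_simps)
    moreover have "q_falling ?q n (r - ?t) * (\<Prod>l\<in>{r - ?t..<r}. ?q ^ n - ?q ^ l) = q_falling ?q n r"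
      unfolding q_falling_def lessThan_atLeast0 by (rule prod.atLeastLessThan_concat) auto
    moreover have "gauss_binom ?q (int (card K) - int ?t) (int r - int ?t) =
        q_falling ?q (card K - ?t) (r - ?t) / q_falling ?q (r - ?t) (r - ?t)"
      using gauss_binom_eq_q_falling[OF q, of "card K - ?t" "r - ?t"] True \<open>?t \<le> card K\<close>
      by (simp add: of_nat_diff)
    ultimately show ?thesis using count True by (simp add: field_simps)
  next
    case False
    then show ?thesis using count by (simp add: gauss_binom_def)
  qed
qed

lemma card_families_coloops_superset:
  fixes K T :: "'b set"
  assumes "finite K" "T \<subseteq> K"
  shows "real (card {C \<in> K \<rightarrow>\<^sub>E (vecs n :: (nat \<Rightarrow> 'a::{finite,field}) set). T \<subseteq> coloops K C}) =
    (\<Sum>r\<le>card K. gauss_binom (real CARD('a)) (int (card K) - int (card T)) (int r - int (card T)) *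
      q_falling (real CARD('a)) n r)"
proof -
  let ?P = "K \<rightarrow>\<^sub>E (vecs n :: (nat \<Rightarrow> 'a) set)"
  let ?A = "\<lambda>r. {C \<in> ?P. T \<subseteq> coloops K C \<and> vs.dim (C ` K) = r}"
  have "vs.dim (C ` K) \<le> card K" for C :: "'b \<Rightarrow> nat \<Rightarrow> 'a"
    using vs.dim_le_card'[of "C ` K"] card_image_le[OF assms(1), of C] assms(1) by simp
  then have "card {C \<in> ?P. T \<subseteq> coloops K C} = card (\<Union>r\<le>card K. ?A r)"
    by (intro arg_cong[where f = card]) auto
  also have "\<dots> = (\<Sum>r\<le>card K. card (?A r))"
    using assms(1) by (intro card_UN_disjoint) (auto simp: finite_PiE finite_vecs)
  finally show ?thesis
    using coloop_count_eq_gauss_binom[OF assms, where 'a = 'a and n = n]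
    by (simp add: coloop_count_def)
qed

section \<open>Inclusion--exclusion\<close>

lemma sum_Pow_card:
  fixes g :: "nat \<Rightarrow> 'a::comm_semiring_1"
  assumes "finite A"
  shows "(\<Sum>U\<in>Pow A. g (card U)) = (\<Sum>j\<le>card A. of_nat (card A choose j) * g j)"
proof -
  have "(\<Sum>U\<in>Pow A. g (card U)) = (\<Sum>j\<le>card A. \<Sum>U\<in>{U \<in> Pow A. card U = j}. g (card U))"
    by (rule sum.group[symmetric]) (use assms in \<open>auto intro: card_mono\<close>)
  also have "\<dots> = (\<Sum>j\<le>card A. of_nat (card A choose j) * g j)"
  proof (rule sum.cong[OF refl])
    fix j
    have "{U \<in> Pow A. card U = j} = {U. U \<subseteq> A \<and> card U = j}" by auto
    then show "(\<Sum>U\<in>{U \<in> Pow A. card U = j}. g (card U)) = of_nat (card A choose j) * g j"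
      by (simp add: n_subsets[OF assms])
  qed
  finally show ?thesis .
qed

lemma sum_supersets_card:
  fixes g :: "nat \<Rightarrow> 'a::comm_semiring_1"
  assumes "finite K" "S \<subseteq> K"
  shows "(\<Sum>T\<in>{T. S \<subseteq> T \<and> T \<subseteq> K}. g (card T)) =
    (\<Sum>j\<le>card K - card S. of_nat ((card K - card S) choose j) * g (card S + j))"
proof -
  have fin: "finite S" "finite (K - S)" using assms finite_subset by auto
  have "{T. S \<subseteq> T \<and> T \<subseteq> K} = (\<union>) S ` Pow (K - S)"
  proof (rule set_eqI)
    fix T
    show "T \<in> {T. S \<subseteq> T \<and> T \<subseteq> K} \<longleftrightarrow> T \<in> (\<union>) S ` Pow (K - S)"
      using assms(2) by (auto intro!: image_eqI[where x = "T - S"])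
  qed
  moreover have "inj_on ((\<union>) S) (Pow (K - S))" by (rule inj_onI) blast
  ultimately have "(\<Sum>T\<in>{T. S \<subseteq> T \<and> T \<subseteq> K}. g (card T)) = (\<Sum>U\<in>Pow (K - S). g (card (S \<union> U)))"
    by (simp add: sum.reindex)
  also have "\<dots> = (\<Sum>U\<in>Pow (K - S). g (card S + card U))"
  proof (rule sum.cong[OF refl])
    fix U assume "U \<in> Pow (K - S)"
    then have "finite U" "S \<inter> U = {}" using finite_subset[OF _ fin(2)] by auto
    then show "g (card (S \<union> U)) = g (card S + card U)" using fin(1) by (simp add: card_Un_disjoint)
  qed
  also have "\<dots> = (\<Sum>j\<le>card K - card S. of_nat ((card K - card S) choose j) * g (card S + j))"
    using sum_Pow_card[OF fin(2), of "\<lambda>j. g (card S + j)"] assms fin(1) by (simp add: card_Diff_subset)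
  finally show ?thesis .
qed

lemma alternating_sum_supersets:
  assumes "finite Y" "S \<subseteq> Y"
  shows "(\<Sum>T\<in>{T. S \<subseteq> T \<and> T \<subseteq> Y}. (-1 :: 'a::comm_ring_1) ^ (card T - card S)) = of_bool (S = Y)"
proof -
  have "(\<Sum>T\<in>{T. S \<subseteq> T \<and> T \<subseteq> Y}. (-1 :: 'a) ^ (card T - card S)) =
      (\<Sum>j\<le>card Y - card S. (-1) ^ j * of_nat ((card Y - card S) choose j))"
    using sum_supersets_card[OF assms, of "\<lambda>t. (-1 :: 'a) ^ (t - card S)"] by (simp add: mult.commute)
  also have "\<dots> = of_bool (S = Y)"
  proof (cases "card Y - card S = 0")
    case True
    then have "S = Y" using card_mono[OF assms] card_subset_eq[OF assms] by simp
    with True show ?thesis by simp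
  next
    case False
    then have "S \<noteq> Y" by auto
    with False show ?thesis by (simp add: choose_alternating_sum)
  qed
  finally show ?thesis .
qed

lemma of_bool_le_card_inclusion_exclusion:
  assumes "finite K" "Y \<subseteq> K"
  shows "(\<Sum>i = x..card K. \<Sum>S\<in>{S. S \<subseteq> K \<and> card S = i}. \<Sum>T\<in>{T. S \<subseteq> T \<and> T \<subseteq> K}.
      (-1 :: 'a::comm_ring_1) ^ (card T - card S) * of_bool (T \<subseteq> Y)) = of_bool (x \<le> card Y)"
proof -
  have inner: "(\<Sum>T\<in>{T. S \<subseteq> T \<and> T \<subseteq> K}. (-1 :: 'a) ^ (card T - card S) * of_bool (T \<subseteq> Y)) =
      of_bool (S = Y)" for S
  proof -
    have "(\<Sum>T\<in>{T. S \<subseteq> T \<and> T \<subseteq> K}. (-1 :: 'a) ^ (card T - card S) * of_bool (T \<subseteq> Y)) =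
        (\<Sum>T\<in>{T. S \<subseteq> T \<and> T \<subseteq> K} \<inter> {T. T \<subseteq> Y}. (-1) ^ (card T - card S))"
      by (rule sum_mult_of_bool_eq, rule finite_subset[of _ "Pow K"]) (use assms(1) in auto)
    also have "\<dots> = of_bool (S = Y)"
    proof (cases "S \<subseteq> Y")
      case True
      have "{T. S \<subseteq> T \<and> T \<subseteq> K} \<inter> {T. T \<subseteq> Y} = {T. S \<subseteq> T \<and> T \<subseteq> Y}"
        using assms(2) by blast
      then show ?thesis
        using alternating_sum_supersets[OF finite_subset[OF assms(2,1)] True] by simp
    next
      case False
      then have "{T. S \<subseteq> T \<and> T \<subseteq> K} \<inter> {T. T \<subseteq> Y} = {}" by blast
      with False show ?thesis by auto
    qed
    finally show ?thesis .
  qed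
  have "finite {S. S \<subseteq> K \<and> card S = i}" for i
    using assms(1) by (simp add: finite_subset[of _ "Pow K"] subset_iff)
  then have count: "(\<Sum>S\<in>{S. S \<subseteq> K \<and> card S = i}. of_bool (S = Y) :: 'a) = of_bool (card Y = i)" for i
    using assms(2) by (simp add: sum.delta')
  have "(\<Sum>i = x..card K. \<Sum>S\<in>{S. S \<subseteq> K \<and> card S = i}. \<Sum>T\<in>{T. S \<subseteq> T \<and> T \<subseteq> K}.
      (-1 :: 'a) ^ (card T - card S) * of_bool (T \<subseteq> Y)) = (\<Sum>i = x..card K. of_bool (card Y = i))"
    by (intro sum.cong refl trans[OF _ count] inner)
  also have "\<dots> = of_bool (x \<le> card Y)" using card_mono[OF assms] by simp
  finally show ?thesis .
qed

lemma card_at_least_inclusion_exclusion: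
  fixes Y :: "'c \<Rightarrow> 'b set" and h :: "nat \<Rightarrow> real"
  assumes "finite A" "finite K" "\<And>c. c \<in> A \<Longrightarrow> Y c \<subseteq> K"
    and h: "\<And>T. T \<subseteq> K \<Longrightarrow> real (card {c \<in> A. T \<subseteq> Y c}) = h (card T)"
  shows "real (card {c \<in> A. x \<le> card (Y c)}) =
    (\<Sum>i = x..card K. real (card K choose i) *
      (\<Sum>j\<le>card K - i. (-1) ^ j * real ((card K - i) choose j) * h (i + j)))"
proof -
  let ?k = "card K"
  let ?SS = "\<lambda>i. {S. S \<subseteq> K \<and> card S = i}"
  let ?TT = "\<lambda>S. {T. S \<subseteq> T \<and> T \<subseteq> K}"
  let ?w = "\<lambda>S T. (-1 :: real) ^ (card T - card S)"
  have "real (card {c \<in> A. x \<le> card (Y c)}) = (\<Sum>c\<in>A. of_bool (x \<le> card (Y c)))"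
    using assms(1) by (simp add: Int_def)
  also have "\<dots> = (\<Sum>c\<in>A. \<Sum>i = x..?k. \<Sum>S\<in>?SS i. \<Sum>T\<in>?TT S. ?w S T * of_bool (T \<subseteq> Y c))"
    by (intro sum.cong refl of_bool_le_card_inclusion_exclusion[symmetric, OF assms(2,3)])
  also have "\<dots> = (\<Sum>i = x..?k. \<Sum>S\<in>?SS i. \<Sum>T\<in>?TT S. ?w S T * (\<Sum>c\<in>A. of_bool (T \<subseteq> Y c)))"
    by (simp add: sum_distrib_left sum.swap[of _ A])
  also have "\<dots> = (\<Sum>i = x..?k. \<Sum>S\<in>?SS i. \<Sum>T\<in>?TT S. ?w S T * h (card T))"
    using assms(1) h by (intro sum.cong refl) (auto simp: Int_def)
  also have "\<dots> = (\<Sum>i = x..?k. \<Sum>S\<in>?SS i. \<Sum>j\<le>?k - i. (-1) ^ j * real ((?k - i) choose j) * h (i + j))"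
  proof (intro sum.cong refl)
    fix i S assume "S \<in> ?SS i"
    then show "(\<Sum>T\<in>?TT S. ?w S T * h (card T)) = (\<Sum>j\<le>?k - i. (-1) ^ j * real ((?k - i) choose j) * h (i + j))"
      using sum_supersets_card[OF assms(2), of S "\<lambda>t. (-1) ^ (t - card S) * h t"] by (simp add: mult_ac)
  qed
  also have "\<dots> = (\<Sum>i = x..?k. real (?k choose i) * (\<Sum>j\<le>?k - i. (-1) ^ j * real ((?k - i) choose j) * h (i + j)))"
    by (simp add: n_subsets[OF assms(2)])
  finally show ?thesis .
qed

section \<open>Recoverable columns of a matrix\<close>

lemma linear_weighted_sum: "Vector_Spaces.linear (\<lambda>a (v :: nat \<Rightarrow> 'a::field) i. a * v i) times (\<lambda>v. \<Sum>l<n. c l * v l)"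
proof -
  have "vector_space (times :: 'a \<Rightarrow> 'a \<Rightarrow> 'a)" by unfold_locales (simp_all add: algebra_simps)
  then show ?thesis
    unfolding Vector_Spaces.linear_iff using vs.vector_space_axioms
    by (simp add: sum.distrib distrib_left sum_distrib_left mult.left_commute)
qed

lemma separating_functional:
  fixes v :: "nat \<Rightarrow> 'a::field"
  assumes "v \<notin> vs.span S"
  obtains f where "Vector_Spaces.linear (\<lambda>a (v :: nat \<Rightarrow> 'a) i. a * v i) times f"
    "f v = 1" "\<And>w. w \<in> vs.span S \<Longrightarrow> f w = 0"
proof -
  obtain B where B: "B \<subseteq> S" "vs.independent B" "S \<subseteq> vs.span B"
    by (rule vs.maximal_independent_subset)
  have "v \<notin> vs.span B" using assms vs.span_mono[OF B(1)] by blast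
  then have ind: "vs.independent (insert v B)" and "v \<notin> B"
    using vs.independent_insertI[OF _ B(2)] vs.span_base by blast+
  define f where "f = vs_pair.construct (insert v B) (\<lambda>b. if b = v then 1 else 0)"
  have lin: "Vector_Spaces.linear (\<lambda>a (v :: nat \<Rightarrow> 'a) i. a * v i) times f"
    unfolding f_def by (rule vs_pair.linear_construct[OF ind])
  moreover have "f v = 1" unfolding f_def by (subst vs_pair.construct_basis[OF ind]) auto
  moreover have "f w = 0" if "w \<in> vs.span S" for w
  proof -
    have "w \<in> vs.span B" using that vs.span_minimal[OF B(3) vs.subspace_span] by blast
    moreover have "f b = 0" if "b \<in> B" for b
      unfolding f_def using that \<open>v \<notin> B\<close> by (subst vs_pair.construct_basis[OF ind]) auto
    ultimately show ?thesis using vs_pair.linear_eq_0_on_span[OF lin] by blast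
  qed
  ultimately show ?thesis using that by blast
qed

lemma vecs_eq_sum_unit_vec:
  fixes w :: "nat \<Rightarrow> 'a::field"
  assumes "w \<in> vecs n"
  shows "w = (\<Sum>l<n. (\<lambda>i. w l * unit_vec l i))"
proof (rule ext)
  fix j
  have "(\<Sum>l<n. (\<lambda>i. w l * unit_vec l i)) j = (\<Sum>l<n. w l * unit_vec l j)"
    by (induction n) auto
  also have "\<dots> = w j" using assms by (simp add: unit_vec_def vecs_def if_distrib cong: if_cong)
  finally show "w j = (\<Sum>l<n. (\<lambda>i. w l * unit_vec l i)) j" by simp
qed

definition col :: "(nat \<Rightarrow> nat \<Rightarrow> 'a) \<Rightarrow> nat \<Rightarrow> nat \<Rightarrow> 'a" where
  "col M j = (\<lambda>i. M i j)"

lemma col_in_vecs: "M \<in> matrices n k \<Longrightarrow> col M j \<in> vecs n"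
  unfolding matrices_def vecs_def col_def by auto

lemma col_eq_0: "M \<in> matrices n k \<Longrightarrow> k \<le> j \<Longrightarrow> col M j = 0"
  unfolding matrices_def col_def by (auto simp: fun_eq_iff)

lemma coloop_if_unit_vec_in_row_space:
  fixes M :: "nat \<Rightarrow> nat \<Rightarrow> 'a::field"
  assumes "unit_vec i \<in> row_space n k M" "i < k"
  shows "i \<in> coloops {..<k} (col M)"
proof -
  obtain c where c: "unit_vec i = (\<lambda>j. \<Sum>l<n. c l * M l j)"
    using assms(1) unfolding row_space_def by blast
  let ?f = "\<lambda>v. \<Sum>l<n. c l * v l"
  have f: "?f (col M j) = unit_vec i j" for j
    using fun_cong[OF c, of j] by (simp add: col_def)
  show ?thesis
  proof (unfold coloops_def, intro CollectI conjI notI)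
    assume "col M i \<in> vs.span (col M ` ({..<k} - {i}))"
    then have "?f (col M i) = 0"
      by (rule vs_pair.linear_eq_0_on_span[OF linear_weighted_sum, rotated]) (auto simp: f unit_vec_def split: if_splits)
    then show False using f[of i] by (simp add: unit_vec_def)
  qed (use assms(2) in simp)
qed

lemma unit_vec_in_row_space_if_coloop:
  fixes M :: "nat \<Rightarrow> nat \<Rightarrow> 'a::field"
  assumes M: "M \<in> matrices n k" and i: "i \<in> coloops {..<k} (col M)"
  shows "unit_vec i \<in> row_space n k M"
proof -
  obtain f where lin: "Vector_Spaces.linear (\<lambda>a (v :: nat \<Rightarrow> 'a) i. a * v i) times f"
    and f_i: "f (col M i) = 1" and f_S: "\<And>w. w \<in> vs.span (col M ` ({..<k} - {i})) \<Longrightarrow> f w = 0"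
    using i unfolding coloops_def by (auto elim: separating_functional)
  define c where "c l = f (unit_vec l)" for l
  have f_dot: "f w = (\<Sum>l<n. c l * w l)" if "w \<in> vecs n" for w
  proof -
    have "f w = (\<Sum>l<n. f (\<lambda>i. w l * unit_vec l i))"
      using vs_pair.linear_sum[OF lin] vecs_eq_sum_unit_vec[OF that] by metis
    also have "\<dots> = (\<Sum>l<n. c l * w l)"
      using vs_pair.linear_scale[OF lin] by (simp add: c_def mult.commute)
    finally show ?thesis .
  qed
  have "unit_vec i j = (\<Sum>l<n. c l * M l j)" for j
  proof -
    have "(\<Sum>l<n. c l * M l j) = f (col M j)"
      using f_dot[OF col_in_vecs[OF M]] by (simp add: col_def)
    also have "\<dots> = unit_vec i j"
    proof (cases "j < k")
      case True
      then show ?thesis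
        using f_i f_S[OF vs.span_base, of "col M j"] by (cases "j = i") (auto simp: unit_vec_def)
    next
      case False
      then show ?thesis
        using i col_eq_0[OF M] vs_pair.linear_0[OF lin] by (simp add: unit_vec_def coloops_def)
    qed
    finally show ?thesis by simp
  qed
  then show ?thesis unfolding row_space_def by blast
qed

lemma bij_betw_matrices_columns:
  "bij_betw (\<lambda>M. restrict (col M) {..<k}) (matrices n k :: (nat \<Rightarrow> nat \<Rightarrow> 'a::zero) set)
      ({..<k} \<rightarrow>\<^sub>E vecs n)"
proof (rule bij_betw_byWitness[where f' = "\<lambda>C i j. if j < k then C j i else 0"])
  show "\<forall>M\<in>matrices n k. (\<lambda>i j. if j < k then restrict (col M) {..<k} j i else 0) = (M :: nat \<Rightarrow> nat \<Rightarrow> 'a)"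
    by (simp add: matrices_def col_def fun_eq_iff)
  show "\<forall>C\<in>{..<k} \<rightarrow>\<^sub>E vecs n. restrict (col (\<lambda>i j. if j < k then C j i else 0)) {..<k} = (C :: nat \<Rightarrow> nat \<Rightarrow> 'a)"
    by (simp add: PiE_iff extensional_def col_def fun_eq_iff)
  show "(\<lambda>M. restrict (col M) {..<k}) ` matrices n k \<subseteq> {..<k} \<rightarrow>\<^sub>E (vecs n :: (nat \<Rightarrow> 'a) set)"
    by (simp add: image_subset_iff matrices_def vecs_def col_def)
  show "(\<lambda>C i j. if j < k then C j i else 0) ` ({..<k} \<rightarrow>\<^sub>E vecs n) \<subseteq> (matrices n k :: (nat \<Rightarrow> nat \<Rightarrow> 'a) set)"
    by (simp add: image_subset_iff matrices_def vecs_def PiE_iff)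
qed

lemma finite_matrices: "finite (matrices n k :: (nat \<Rightarrow> nat \<Rightarrow> 'a::{finite,zero}) set)"
  by (simp add: bij_betw_finite[OF bij_betw_matrices_columns] finite_PiE finite_vecs)

lemma card_matrices: "card (matrices n k :: (nat \<Rightarrow> nat \<Rightarrow> 'a::{finite,zero}) set) = CARD('a) ^ (n * k)"
  by (simp add: bij_betw_same_card[OF bij_betw_matrices_columns] card_PiE card_vecs power_mult)

lemma coloops_restrict: "coloops K (restrict C K) = coloops K C"
proof -
  have "restrict C K ` (K - {i}) = C ` (K - {i})" for i by auto
  then show ?thesis unfolding coloops_def by auto
qed

lemma recoverable_eq_coloops:
  fixes M :: "nat \<Rightarrow> nat \<Rightarrow> 'a::field"
  assumes "M \<in> matrices n k"
  shows "recoverable n k M = coloops {..<k} (restrict (col M) {..<k})"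
  using coloop_if_unit_vec_in_row_space unit_vec_in_row_space_if_coloop[OF assms]
  unfolding coloops_restrict recoverable_def by (auto simp: coloops_def)

lemma card_recoverable_at_least_eq:
  "card {M \<in> (matrices n k :: (nat \<Rightarrow> nat \<Rightarrow> 'a::{finite,field}) set). x \<le> card (recoverable n k M)} =
   card {C \<in> {..<k} \<rightarrow>\<^sub>E (vecs n :: (nat \<Rightarrow> 'a) set). x \<le> card (coloops {..<k} C)}"
proof -
  let ?cols = "\<lambda>M :: nat \<Rightarrow> nat \<Rightarrow> 'a. restrict (col M) {..<k}"
  have "{M \<in> matrices n k. x \<le> card (recoverable n k M)} =
      {M \<in> matrices n k. x \<le> card (coloops {..<k} (?cols M))}"
    by (auto simp: recoverable_eq_coloops)
  moreover have "bij_betw ?cols {M \<in> matrices n k. x \<le> card (coloops {..<k} (?cols M))}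
      {C \<in> {..<k} \<rightarrow>\<^sub>E vecs n. x \<le> card (coloops {..<k} C)}"
    using bij_betw_matrices_columns[where 'a = 'a, of k n] unfolding bij_betw_def
    by (auto simp: inj_on_def image_iff)
  ultimately show ?thesis by (simp add: bij_betw_same_card)
qed

lemma sum_regroup_by_rank:
  fixes q :: real
  shows "(\<Sum>i = x..k. real (k choose i) * (\<Sum>j\<le>k - i. (-1) ^ j * real ((k - i) choose j) *
      (\<Sum>r\<le>k. gauss_binom q (int k - int (i + j)) (int r - int (i + j)) * q_falling q n r))) =
    (\<Sum>r = x..min n k. (\<Sum>i = x..r. real (k choose i) *
      (\<Sum>j = 0..k - i. (-1) ^ j * real ((k - i) choose j) *
        gauss_binom q (int k - int i - int j) (int r - int i - int j))) * (\<Prod>l = 0..<r. q ^ n - q ^ l))"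
proof -
  define A where "A i r = real (k choose i) * (\<Sum>j = 0..k - i. (-1) ^ j * real ((k - i) choose j) *
    gauss_binom q (int k - int i - int j) (int r - int i - int j))" for i r
  have A_eq_0: "A i r = 0" if "r < i" for i r
    unfolding A_def gauss_binom_def using that by simp
  have "real (k choose i) * (\<Sum>j\<le>k - i. (-1) ^ j * real ((k - i) choose j) *
      (\<Sum>r\<le>k. gauss_binom q (int k - int (i + j)) (int r - int (i + j)) * q_falling q n r)) =
    (\<Sum>r\<le>k. A i r * q_falling q n r)" for i
  proof -
    have "real (k choose i) * (\<Sum>j\<le>k - i. (-1) ^ j * real ((k - i) choose j) *
        (\<Sum>r\<le>k. gauss_binom q (int k - int (i + j)) (int r - int (i + j)) * q_falling q n r)) =
      (\<Sum>j\<le>k - i. \<Sum>r\<le>k. real (k choose i) * ((-1) ^ j * real ((k - i) choose j) *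
        gauss_binom q (int k - int i - int j) (int r - int i - int j)) * q_falling q n r)"
      by (simp add: sum_distrib_left algebra_simps)
    also have "\<dots> = (\<Sum>r\<le>k. A i r * q_falling q n r)"
      unfolding A_def by (subst sum.swap) (simp add: sum_distrib_left sum_distrib_right mult_ac atLeast0AtMost)
    finally show ?thesis .
  qed
  then have "(\<Sum>i = x..k. real (k choose i) * (\<Sum>j\<le>k - i. (-1) ^ j * real ((k - i) choose j) *
      (\<Sum>r\<le>k. gauss_binom q (int k - int (i + j)) (int r - int (i + j)) * q_falling q n r))) =
    (\<Sum>r\<le>k. \<Sum>i = x..k. A i r * q_falling q n r)"
    by (simp add: sum.swap[of _ "{x..k}"])
  also have "\<dots> = (\<Sum>r\<le>k. \<Sum>i = x..r. A i r * q_falling q n r)"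
    by (intro sum.cong refl sum.mono_neutral_right) (auto simp: A_eq_0)
  also have "\<dots> = (\<Sum>r = x..min n k. \<Sum>i = x..r. A i r * q_falling q n r)"
    by (intro sum.mono_neutral_right) (auto simp: q_falling_eq_0)
  also have "\<dots> = (\<Sum>r = x..min n k. (\<Sum>i = x..r. A i r) * (\<Prod>l = 0..<r. q ^ n - q ^ l))"
    by (simp add: sum_distrib_right q_falling_def atLeast0LessThan)
  finally show ?thesis unfolding A_def .
qed

theorem proposition1:
  fixes n k x :: nat
  assumes "n \<ge> 1" and "k \<ge> 1" and "x \<le> k"
  defines "q \<equiv> CARD('a::{finite,field})"
  shows "measure_pmf.prob (pmf_of_set (matrices n k :: (nat \<Rightarrow> nat \<Rightarrow> 'a) set))
            {M. x \<le> card (recoverable n k M)}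
       = (1 / real q ^ (n * k)) *
         (\<Sum>r = x..min n k.
            (\<Sum>i = x..r. real (k choose i) *
               (\<Sum>j = 0..k - i. (-1) ^ j * real ((k - i) choose j) *
                  gauss_binom (real q) (int k - int i - int j) (int r - int i - int j)))
            * (\<Prod>l = 0..<r. (real q ^ n - real q ^ l)))"
proof -
  let ?M = "matrices n k :: (nat \<Rightarrow> nat \<Rightarrow> 'a) set"
  let ?P = "{..<k} \<rightarrow>\<^sub>E (vecs n :: (nat \<Rightarrow> 'a) set)"
  let ?h = "\<lambda>t. \<Sum>r\<le>k. gauss_binom (real q) (int k - int t) (int r - int t) * q_falling (real q) n r"
  have "(\<lambda>_ _. 0) \<in> ?M" by (simp add: matrices_def)
  then have "measure_pmf.prob (pmf_of_set ?M) {M. x \<le> card (recoverable n k M)} =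
      real (card {M \<in> ?M. x \<le> card (recoverable n k M)}) / real (card ?M)"
    using measure_pmf_of_set[of ?M "{M. x \<le> card (recoverable n k M)}"] finite_matrices
    by (auto simp: Int_def)
  also have "real (card {M \<in> ?M. x \<le> card (recoverable n k M)}) =
      (\<Sum>i = x..k. real (k choose i) * (\<Sum>j\<le>k - i. (-1) ^ j * real ((k - i) choose j) * ?h (i + j)))"
    unfolding card_recoverable_at_least_eq
    using card_at_least_inclusion_exclusion[of ?P "{..<k}" "coloops {..<k}" ?h x]
      card_families_coloops_superset[of "{..<k}", where 'a = 'a and n = n]
    by (simp add: q_def finite_PiE finite_vecs coloops_def subset_iff)
  also have "\<dots> = (\<Sum>r = x..min n k. (\<Sum>i = x..r. real (k choose i) *
      (\<Sum>j = 0..k - i. (-1) ^ j * real ((k - i) choose j) *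
        gauss_binom (real q) (int k - int i - int j) (int r - int i - int j))) *
      (\<Prod>l = 0..<r. real q ^ n - real q ^ l))"
    by (rule sum_regroup_by_rank)
  also have "real (card ?M) = real q ^ (n * k)" by (simp add: q_def card_matrices)
  finally show ?thesis by simp
qed

end
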